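(* Let $\hat x=(\dots,x_2,x_1)\in\mathrm{Im}(\Psi^+)$ satisfy $x_m\le p_m$ for all $m\ge1$, and let $k\ge1$. The following are equivalent: (1) $c_{k+2l}x_k-c_{k+2l-1}x_{k+1}\ge0$ for all $l\ge1$; (2) $\gamma_kx_k-x_{k+1}\ge0$.
   Context: Let $a_1,a_2\in\mathbb Z_{\ge1}$ with $a_1a_2>4$, $A=\begin{pmatrix}2&-a_1\\-a_2&2\end{pmatrix}$, $\mathfrak g=\mathfrak g(A)$ with simple roots $\alpha_1,\alpha_2$, coroots $\alpha_i^\vee$ ($\langle\alpha_2,\alpha_1^\vee\rangle=-a_1$, $\langle\alpha_1,\alpha_2^\vee\rangle=-a_2$), fundamental weights $\Lambda_1,\Lambda_2$. For $k\in\mathbb Z$, $i_k=1$ if $k$ odd, $i_k=2$ if $k$ even. $\mathbb Z^{+\infty}_{\ge0}$ is the set of sequences $(\dots,x_2,x_1)$ of nonnegative integers, almost all zero, with the Nakashima–Zelevinsky crystal structure for the sequence $(\dots,i_2,i_1)$, and $\Psi^+:\mathcal B(\infty)\hookrightarrow\mathbb Z^{+\infty}_{\ge0}$ the corresponding crystal embedding of the crystal basis of $U_q^-(\mathfrak g)$ (sending the highest element to the zero sequence). Put $\alpha=\frac{a_1a_2+\sqrt{a_1^2a_2^2-4a_1a_2}}{2a_2}$, $\beta=\frac{a_1a_2+\sqrt{a_1^2a_2^2-4a_1a_2}}{2a_1}$, $\gamma_k=\alpha$ ($k$ even), $\beta$ ($k$ odd). Fix $\lambda=k_1\Lambda_1-k_2\Lambda_2$,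 $k_1,k_2\in\mathbb Z_{>0}$, with: if $a_1,a_2\ge2$, $k_2\le k_1<(a_1-1)k_2$ or $k_1<k_2\le(a_2-1)k_1$; if $a_1=1$, $2k_1\le k_2\le(a_2-2)k_1$; if $a_2=1$, $2k_2\le k_1\le(a_1-2)k_2$. Let $p_0=k_2$, $p_1=k_1$, $p_{m+2}=a_2p_{m+1}-p_m$ ($m\ge0$ even), $p_{m+2}=a_1p_{m+1}-p_m$ ($m\ge0$ odd). Define $c_0=0$, $c_1=1$, $c_{j+2}=a_1c_{j+1}-c_j$ ($j$ even), $c_{j+2}=a_2c_{j+1}-c_j$ ($j$ odd). *)

theory Defs
  imports Complex_Main
begin

(* Sequences (..., x_2, x_1) are modelled as functions x :: nat => int;
   position 0 is unused (kept 0). *)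

definition ik :: "nat \<Rightarrow> nat" where
  "ik k = (if odd k then 1 else 2)"

(* Cartan integer <h_i, alpha_j>: <alpha_2, alpha_1^vee> = -a1, <alpha_1, alpha_2^vee> = -a2 *)
definition cartan :: "int \<Rightarrow> int \<Rightarrow> nat \<Rightarrow> nat \<Rightarrow> int" where
  "cartan a1 a2 i j = (if i = j then 2 else if i = 1 then - a1 else - a2)"

definition nz_sigma :: "int \<Rightarrow> int \<Rightarrow> (nat \<Rightarrow> int) \<Rightarrow> nat \<Rightarrow> int" where
  "nz_sigma a1 a2 x k =
     x k + (\<Sum>j\<in>{j. k < j \<and> x j \<noteq> 0}. cartan a1 a2 (ik k) (ik j) * x j)"

definition nz_mf :: "int \<Rightarrow> int \<Rightarrow> nat \<Rightarrow> (nat \<Rightarrow> int) \<Rightarrow> nat" where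
  "nz_mf a1 a2 i x = (LEAST k. 1 \<le> k \<and> ik k = i \<and>
      (\<forall>k'. 1 \<le> k' \<and> ik k' = i \<longrightarrow> nz_sigma a1 a2 x k' \<le> nz_sigma a1 a2 x k))"

definition nz_f :: "int \<Rightarrow> int \<Rightarrow> nat \<Rightarrow> (nat \<Rightarrow> int) \<Rightarrow> (nat \<Rightarrow> int)" where
  "nz_f a1 a2 i x = (let m = nz_mf a1 a2 i x in x(m := x m + 1))"

(* Im(Psi^+): the connected component of the zero sequence, i.e. all
   \tilde f_{j_1} ... \tilde f_{j_l} 0 (Kashiwara / Nakashima--Zelevinsky) *)
inductive_set ImPsi :: "int \<Rightarrow> int \<Rightarrow> (nat \<Rightarrow> int) set" for a1 a2 where
  zero: "(\<lambda>_. 0) \<in> ImPsi a1 a2"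
| step: "x \<in> ImPsi a1 a2 \<Longrightarrow> i \<in> {1, 2} \<Longrightarrow> nz_f a1 a2 i x \<in> ImPsi a1 a2"

fun pseq :: "int \<Rightarrow> int \<Rightarrow> int \<Rightarrow> int \<Rightarrow> nat \<Rightarrow> int" where
  "pseq a1 a2 k1 k2 0 = k2"
| "pseq a1 a2 k1 k2 (Suc 0) = k1"
| "pseq a1 a2 k1 k2 (Suc (Suc m)) =
     (if even m then a2 else a1) * pseq a1 a2 k1 k2 (Suc m) - pseq a1 a2 k1 k2 m"

fun cseq :: "int \<Rightarrow> int \<Rightarrow> nat \<Rightarrow> int" where
  "cseq a1 a2 0 = 0"
| "cseq a1 a2 (Suc 0) = 1"
| "cseq a1 a2 (Suc (Suc j)) =
     (if even j then a1 else a2) * cseq a1 a2 (Suc j) - cseq a1 a2 j"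

definition alpha_c :: "int \<Rightarrow> int \<Rightarrow> real" where
  "alpha_c a1 a2 = (a1 * a2 + sqrt (a1^2 * a2^2 - 4 * a1 * a2)) / (2 * a2)"

definition beta_c :: "int \<Rightarrow> int \<Rightarrow> real" where
  "beta_c a1 a2 = (a1 * a2 + sqrt (a1^2 * a2^2 - 4 * a1 * a2)) / (2 * a1)"

definition gamma_c :: "int \<Rightarrow> int \<Rightarrow> nat \<Rightarrow> real" where
  "gamma_c a1 a2 k = (if even k then alpha_c a1 a2 else beta_c a1 a2)"

end

theory Submission imports Defs begin

(* With alpha, beta the positive numbers satisfying alpha * beta + 1 = a1 * beta = a2 * alpha,
   the defect d_j = c_(j+1) - gamma_(j+1) c_j starts at d_0 = 1 and satisfies
   d_(j+1) = d_j / gamma_(j+1), so it is positive and shrinks by the factor alpha * beta > 1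
   every two steps. For j = k + 2l - 1,
     c_(j+1) x_k - c_j x_(k+1) = c_j (gamma_k x_k - x_(k+1)) + d_j x_k
   with c_j >= 1. If gamma_k x_k >= x_(k+1) both terms are nonnegative; otherwise the first
   is at most gamma_k x_k - x_(k+1) < 0 while the second tends to 0 as l grows. *)

lemma discriminant_nonneg:
  fixes a1 a2 :: int
  assumes "4 \<le> a1 * a2"
  shows "0 \<le> (real_of_int a1)\<^sup>2 * (real_of_int a2)\<^sup>2 - 4 * real_of_int a1 * real_of_int a2"
proof -
  have "4 \<le> real_of_int a1 * a2" using assms by (metis of_int_mult of_int_numeral of_int_le_iff)
  then have "0 \<le> (real_of_int a1 * a2) * (real_of_int a1 * a2 - 4)" by simp
  then show ?thesis by (simp add: power2_eq_square algebra_simps)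
qed

lemma alpha_c_ge_half:
  fixes a1 a2 :: int
  assumes "0 < a2" "4 \<le> a1 * a2"
  shows "a1 / 2 \<le> alpha_c a1 a2"
proof -
  have "a1 / 2 = real_of_int a1 * a2 / (2 * real_of_int a2)" using assms(1) by simp
  also have "\<dots> \<le> alpha_c a1 a2"
    unfolding alpha_c_def using assms discriminant_nonneg by (intro divide_right_mono) auto
  finally show ?thesis .
qed

lemma beta_c_ge_half:
  fixes a1 a2 :: int
  assumes "0 < a1" "4 \<le> a1 * a2"
  shows "a2 / 2 \<le> beta_c a1 a2"
proof -
  have "a2 / 2 = real_of_int a1 * a2 / (2 * real_of_int a1)" using assms(1) by simp
  also have "\<dots> \<le> beta_c a1 a2"
    unfolding beta_c_def using assms discriminant_nonneg by (intro divide_right_mono) auto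
  finally show ?thesis .
qed

lemma a1_mult_beta_c: "a1 \<noteq> 0 \<Longrightarrow> a2 \<noteq> 0 \<Longrightarrow> a1 * beta_c a1 a2 = a2 * alpha_c a1 a2"
  unfolding alpha_c_def beta_c_def by simp

lemma alpha_c_mult_beta_c_add_one:
  fixes a1 a2 :: int
  assumes "0 < a1" "0 < a2" "4 \<le> a1 * a2"
  shows "alpha_c a1 a2 * beta_c a1 a2 + 1 = a1 * beta_c a1 a2"
proof -
  define D where "D = sqrt ((real_of_int a1)\<^sup>2 * (real_of_int a2)\<^sup>2 - 4 * real_of_int a1 * real_of_int a2)"
  have D2: "D\<^sup>2 = (real_of_int a1)\<^sup>2 * (real_of_int a2)\<^sup>2 - 4 * real_of_int a1 * real_of_int a2"
    unfolding D_def using discriminant_nonneg[OF assms(3)] by simp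
  have alpha: "alpha_c a1 a2 = (real_of_int a1 * a2 + D) / (2 * real_of_int a2)"
    and beta: "beta_c a1 a2 = (real_of_int a1 * a2 + D) / (2 * real_of_int a1)"
    unfolding alpha_c_def beta_c_def D_def by simp_all
  have "D * D = real_of_int a1 * a1 * a2 * a2 - 4 * real_of_int a1 * a2"
    using D2 by (simp add: power2_eq_square)
  then show ?thesis unfolding alpha beta using assms(1,2)
    by (simp add: field_simps) algebra
qed

lemma gamma_c_pos:
  fixes a1 a2 :: int
  assumes "0 < a1" "0 < a2" "4 \<le> a1 * a2"
  shows "0 < gamma_c a1 a2 j"
  using alpha_c_ge_half[OF assms(2,3)] beta_c_ge_half[OF assms(1,3)] assms(1,2)
  unfolding gamma_c_def by auto

lemma gamma_c_add_even [simp]: "gamma_c a1 a2 (j + 2 * n) = gamma_c a1 a2 j"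
  unfolding gamma_c_def by simp

lemma gamma_c_Suc_mult_eq_1:
  fixes a1 a2 :: int
  assumes "0 < a1" "0 < a2" "4 \<le> a1 * a2"
  shows "gamma_c a1 a2 (Suc j) * ((if even j then a1 else a2) - gamma_c a1 a2 j) = 1"
  using alpha_c_mult_beta_c_add_one[OF assms] a1_mult_beta_c[of a1 a2] assms(1,2)
  unfolding gamma_c_def by (auto simp: algebra_simps)

definition cseq_defect :: "int \<Rightarrow> int \<Rightarrow> nat \<Rightarrow> real" where
  "cseq_defect a1 a2 j = cseq a1 a2 (Suc j) - gamma_c a1 a2 (Suc j) * cseq a1 a2 j"

lemma cseq_defect_0 [simp]: "cseq_defect a1 a2 0 = 1"
  unfolding cseq_defect_def by simp

lemma cseq_defect_Suc:
  fixes a1 a2 :: int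
  assumes "0 < a1" "0 < a2" "4 \<le> a1 * a2"
  shows "cseq_defect a1 a2 (Suc j) = cseq_defect a1 a2 j / gamma_c a1 a2 (Suc j)"
proof -
  define r where "r = real_of_int (if even j then a1 else a2) - gamma_c a1 a2 j"
  have r: "r = 1 / gamma_c a1 a2 (Suc j)"
    using gamma_c_Suc_mult_eq_1[OF assms, of j] gamma_c_pos[OF assms, of "Suc j"]
    unfolding r_def by (simp add: field_simps)
  have "cseq_defect a1 a2 (Suc j) = r * cseq a1 a2 (Suc j) - cseq a1 a2 j"
    unfolding cseq_defect_def r_def gamma_c_def by (simp add: algebra_simps)
  also have "\<dots> = cseq_defect a1 a2 j / gamma_c a1 a2 (Suc j)"
    using gamma_c_pos[OF assms, of "Suc j"] unfolding r cseq_defect_def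
    by (simp add: field_simps)
  finally show ?thesis .
qed

lemma cseq_defect_pos:
  fixes a1 a2 :: int
  assumes "0 < a1" "0 < a2" "4 \<le> a1 * a2"
  shows "0 < cseq_defect a1 a2 j"
  by (induction j) (simp_all add: cseq_defect_Suc[OF assms] gamma_c_pos[OF assms])

lemma cseq_defect_add_even:
  fixes a1 a2 :: int
  assumes "0 < a1" "0 < a2" "4 \<le> a1 * a2"
  shows "cseq_defect a1 a2 (j + 2 * n) = cseq_defect a1 a2 j / (alpha_c a1 a2 * beta_c a1 a2) ^ n"
proof (induction n)
  case (Suc n)
  have "gamma_c a1 a2 (Suc (j + 2 * n)) * gamma_c a1 a2 (Suc (Suc (j + 2 * n)))
      = alpha_c a1 a2 * beta_c a1 a2"
    unfolding gamma_c_def by auto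
  with Suc show ?case by (simp add: cseq_defect_Suc[OF assms] field_simps)
qed simp

lemma one_less_alpha_c_mult_beta_c:
  fixes a1 a2 :: int
  assumes "0 < a1" "0 < a2" "4 < a1 * a2"
  shows "1 < alpha_c a1 a2 * beta_c a1 a2"
proof -
  have "1 < real_of_int a1 / 2 * (a2 / 2)"
    using assms(3) by (simp add: field_simps) (metis of_int_less_iff of_int_mult of_int_numeral)
  also have "\<dots> \<le> alpha_c a1 a2 * beta_c a1 a2"
    using alpha_c_ge_half[of a2 a1] beta_c_ge_half[of a1 a2] assms by (intro mult_mono) auto
  finally show ?thesis .
qed

lemma cseq_defect_add_even_tendsto_0:
  fixes a1 a2 :: int
  assumes "0 < a1" "0 < a2" "4 < a1 * a2"
  shows "(\<lambda>n. cseq_defect a1 a2 (j + 2 * n)) \<longlonglongrightarrow> 0"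
  unfolding cseq_defect_add_even[OF assms(1,2) less_imp_le[OF assms(3)]]
  by (rule LIMSEQ_divide_realpow_zero[OF one_less_alpha_c_mult_beta_c[OF assms]])

lemma cseq_Suc_pos:
  fixes a1 a2 :: int
  assumes "0 < a1" "0 < a2" "4 \<le> a1 * a2"
  shows "0 < cseq a1 a2 (Suc j)"
proof (induction j)
  case (Suc j)
  have "real_of_int (cseq a1 a2 (Suc (Suc j)))
      = gamma_c a1 a2 (Suc (Suc j)) * cseq a1 a2 (Suc j) + cseq_defect a1 a2 (Suc j)"
    unfolding cseq_defect_def by simp
  also have "\<dots> > 0"
    using Suc gamma_c_pos[OF assms] cseq_defect_pos[OF assms]
    by (intro add_pos_pos mult_pos_pos) simp_all
  finally show ?case by (simp only: of_int_0_less_iff)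
qed simp

lemma cseq_combination_eq:
  fixes y z :: int
  shows "cseq a1 a2 (Suc j) * y - cseq a1 a2 j * z
       = cseq a1 a2 j * (gamma_c a1 a2 (Suc j) * y - z) + cseq_defect a1 a2 j * y"
  unfolding cseq_defect_def by (simp add: algebra_simps)

lemma ImPsi_nonneg: "x \<in> ImPsi a1 a2 \<Longrightarrow> 0 \<le> x m"
proof (induction arbitrary: m rule: ImPsi.induct)
  case (step x i)
  then show ?case unfolding nz_f_def Let_def by simp
qed simp

lemma cseq_combinations_nonneg_iff:
  fixes a1 a2 y z :: int
  assumes "0 < a1" "0 < a2" "4 < a1 * a2" "0 \<le> y"
  shows "(\<forall>l\<ge>1. 0 \<le> cseq a1 a2 (k + 2 * l) * y - cseq a1 a2 (k + 2 * l - 1) * z)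
         \<longleftrightarrow> 0 \<le> gamma_c a1 a2 k * y - z"
proof -
  note params = assms(1,2) less_imp_le[OF assms(3)]
  define j where "j l = k + 2 * l - 1" for l
  have comb: "real_of_int (cseq a1 a2 (k + 2 * l) * y - cseq a1 a2 (j l) * z)
      = cseq a1 a2 (j l) * (gamma_c a1 a2 k * y - z) + cseq_defect a1 a2 (j l) * y"
    if "1 \<le> l" for l
  proof -
    have "Suc (j l) = k + 2 * l" using that unfolding j_def by simp
    then show ?thesis using cseq_combination_eq[of a1 a2 "j l" y z] by simp
  qed
  have c_ge_1: "1 \<le> cseq a1 a2 (j l)" if "1 \<le> l" for l
  proof -
    have "j l = Suc (k + 2 * l - 2)" using that unfolding j_def by simp
    then show ?thesis using cseq_Suc_pos[OF params, of "k + 2 * l - 2"] by simp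
  qed
  show ?thesis
  proof
    assume all_l: "\<forall>l\<ge>1. 0 \<le> cseq a1 a2 (k + 2 * l) * y - cseq a1 a2 (k + 2 * l - 1) * z"
    show "0 \<le> gamma_c a1 a2 k * y - z"
    proof (rule ccontr)
      define \<delta> where "\<delta> = z - gamma_c a1 a2 k * y"
      assume "\<not> 0 \<le> gamma_c a1 a2 k * y - z"
      then have "0 < \<delta>" unfolding \<delta>_def by simp
      have "(\<lambda>n. cseq_defect a1 a2 (k + 1 + 2 * n) * y) \<longlonglongrightarrow> 0 * real_of_int y"
        by (intro tendsto_mult_right cseq_defect_add_even_tendsto_0 assms(1-3))
      from order_tendstoD(2)[OF this] \<open>0 < \<delta>\<close>
      obtain n where small: "cseq_defect a1 a2 (k + 1 + 2 * n) * y < \<delta>"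
        by (auto simp: eventually_sequentially)
      have one_le_Suc: "1 \<le> Suc n" by simp
      have "0 \<le> real_of_int (cseq a1 a2 (k + 2 * Suc n) * y - cseq a1 a2 (j (Suc n)) * z)"
        unfolding j_def of_int_0_le_iff using all_l one_le_Suc by blast
      then have "cseq a1 a2 (j (Suc n)) * \<delta> \<le> cseq_defect a1 a2 (j (Suc n)) * y"
        unfolding comb[OF one_le_Suc] \<delta>_def by (simp add: algebra_simps)
      moreover have "\<delta> \<le> cseq a1 a2 (j (Suc n)) * \<delta>"
        using c_ge_1[OF one_le_Suc] \<open>0 < \<delta>\<close> by simp
      moreover have "j (Suc n) = k + 1 + 2 * n" unfolding j_def by simp
      ultimately show False using small by simp
    qed
  next
    assume "0 \<le> gamma_c a1 a2 k * y - z"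
    moreover have "0 \<le> cseq_defect a1 a2 (j l) * y" for l
      using cseq_defect_pos[OF params] assms(4) by (simp add: less_imp_le)
    ultimately have "0 \<le> real_of_int (cseq a1 a2 (k + 2 * l) * y - cseq a1 a2 (j l) * z)"
      if "1 \<le> l" for l
      using comb[OF that] c_ge_1[OF that] by simp
    then show "\<forall>l\<ge>1. 0 \<le> cseq a1 a2 (k + 2 * l) * y - cseq a1 a2 (k + 2 * l - 1) * z"
      unfolding j_def of_int_0_le_iff by blast
  qed
qed

theorem proposition4p5:
  fixes a1 a2 k1 k2 :: int and x :: "nat \<Rightarrow> int" and k :: nat
  assumes "a1 \<ge> 1" and "a2 \<ge> 1" and "a1 * a2 > 4"
    and "k1 > 0" and "k2 > 0"
    and "a1 \<ge> 2 \<and> a2 \<ge> 2 \<longrightarrow>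
           (k2 \<le> k1 \<and> k1 < (a1 - 1) * k2) \<or> (k1 < k2 \<and> k2 \<le> (a2 - 1) * k1)"
    and "a1 = 1 \<longrightarrow> 2 * k1 \<le> k2 \<and> k2 \<le> (a2 - 2) * k1"
    and "a2 = 1 \<longrightarrow> 2 * k2 \<le> k1 \<and> k1 \<le> (a1 - 2) * k2"
    and "x \<in> ImPsi a1 a2"
    and "\<forall>m\<ge>1. x m \<le> pseq a1 a2 k1 k2 m"
    and "k \<ge> 1"
  shows "(\<forall>l\<ge>1. cseq a1 a2 (k + 2 * l) * x k - cseq a1 a2 (k + 2 * l - 1) * x (k + 1) \<ge> 0)
         \<longleftrightarrow> gamma_c a1 a2 k * x k - x (k + 1) \<ge> 0"
  using cseq_combinations_nonneg_iff[of a1 a2 "x k" k "x (k + 1)"]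
    assms(1-3) ImPsi_nonneg[OF assms(9)] by simp

end
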